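(* Assume Assumption 1 and that there are reals $\xi_i$, $i\in M$, with ${\bf A}^i=\xi_i{\bf I}$ for all $i\in M$. Assume $d^*=\min_{j\in N}D_{jj}$ is attained at the unique index $j_1$. Then the Shor relaxation (S) is exact, i.e. $v^\star=c^\star$, if there are no $\boldsymbol{\mu}\in\mathbb{R}^m$ and $x_{j_1},z_{j_1}\in\mathbb{R}$ satisfying: $d^*+\sum_{i\in M}\mu_i\xi_i=0$; $c_{j_1}+\sum_{i\in M}\mu_ia_{ij_1}=0$; for all $i\in M$: $\xi_iz_{j_1}+\sum_{j\ne j_1}\xi_i\Big(\frac{c_j+\sum_{l\in M}\mu_la_{lj}}{D_{jj}-d^*}\Big)^2+2a_{ij_1}x_{j_1}-2\sum_{j\ne j_1}a_{ij}\frac{c_j+\sum_{l\in M}\mu_la_{lj}}{D_{jj}-d^*}\le b_i$; $x_{j_1}^2\le z_{j_1}$; $\mu_i\ge 0$ for all $i\in M$.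
   Context: Let $N=\{1,\dots,n\}$ and $M=\{1,\dots,m\}$. Let ${\bf D}$ and ${\bf A}^i$ ($i\in M$) be real diagonal $n\times n$ matrices, ${\bf c},{\bf a}_i\in\mathbb{R}^n$ ($a_{ij}$ denotes the $j$-th entry of ${\bf a}_i$) and $b_i\in\mathbb{R}$. The diagonal QCQP is (P): $c^\star=\inf\{{\bf x}^\top{\bf D}{\bf x}+2{\bf c}^\top{\bf x} : {\bf x}^\top{\bf A}^i{\bf x}+2{\bf a}_i^\top{\bf x}\le b_i,\ i\in M\}$. Its Shor relaxation is (S): $v^\star=\inf\{{\bf D}\bullet{\bf X}+2{\bf c}^\top{\bf x} : {\bf A}^i\bullet{\bf X}+2{\bf a}_i^\top{\bf x}\le b_i\ (i\in M),\ {\bf X}-{\bf x}{\bf x}^\top\succeq {\bf O}\}$, where ${\bf P}\bullet{\bf Q}=\mathrm{trace}({\bf P}{\bf Q})$. Assumption 1: (i) the feasible region of (P) is nonempty; (ii) there exists $\bar{\bf y}\ge 0$ with $\sum_{i\in M}\bar y_i{\bf A}^i\succ{\bf O}$; (iii) the feasible region of (S) has nonempty interior. *)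

theory Defs
  imports "HOL-Analysis.Analysis"
begin

definition frob :: "real^'n^'n \<Rightarrow> real^'n^'n \<Rightarrow> real" where
  "frob P Q = trace (P ** Q)"

definition diagonal_mat :: "real^'n^'n \<Rightarrow> bool" where
  "diagonal_mat P \<longleftrightarrow> (\<forall>i j. i \<noteq> j \<longrightarrow> P $ i $ j = 0)"

definition symmetric_mat :: "real^'n^'n \<Rightarrow> bool" where
  "symmetric_mat P \<longleftrightarrow> transpose P = P"

definition psd :: "real^'n^'n \<Rightarrow> bool" where
  "psd P \<longleftrightarrow> symmetric_mat P \<and> (\<forall>v. 0 \<le> v \<bullet> (P *v v))"

definition pd :: "real^'n^'n \<Rightarrow> bool" where
  "pd P \<longleftrightarrow> symmetric_mat P \<and> (\<forall>v. v \<noteq> 0 \<longrightarrow> 0 < v \<bullet> (P *v v))"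

definition outer :: "real^'n \<Rightarrow> real^'n \<Rightarrow> real^'n^'n" where
  "outer x y = (\<chi> i j. x $ i * y $ j)"

definition qf :: "real^'n^'n \<Rightarrow> real^'n \<Rightarrow> real^'n \<Rightarrow> real" where
  "qf P q x = x \<bullet> (P *v x) + 2 * (q \<bullet> x)"

definition feasP :: "('m \<Rightarrow> real^'n^'n) \<Rightarrow> ('m \<Rightarrow> real^'n) \<Rightarrow> ('m \<Rightarrow> real) \<Rightarrow> (real^'n) set" where
  "feasP A a b = {x. \<forall>i. qf (A i) (a i) x \<le> b i}"

definition cstar :: "real^'n^'n \<Rightarrow> real^'n \<Rightarrow> ('m \<Rightarrow> real^'n^'n) \<Rightarrow> ('m \<Rightarrow> real^'n) \<Rightarrow> ('m \<Rightarrow> real) \<Rightarrow> ereal" where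
  "cstar D c A a b = (INF x \<in> feasP A a b. ereal (qf D c x))"

definition feasS :: "('m \<Rightarrow> real^'n^'n) \<Rightarrow> ('m \<Rightarrow> real^'n) \<Rightarrow> ('m \<Rightarrow> real) \<Rightarrow> ((real^'n^'n) \<times> (real^'n)) set" where
  "feasS A a b = {(X, x). symmetric_mat X \<and> (\<forall>i. frob (A i) X + 2 * (a i \<bullet> x) \<le> b i)
                        \<and> psd (X - outer x x)}"

definition vstar :: "real^'n^'n \<Rightarrow> real^'n \<Rightarrow> ('m \<Rightarrow> real^'n^'n) \<Rightarrow> ('m \<Rightarrow> real^'n) \<Rightarrow> ('m \<Rightarrow> real) \<Rightarrow> ereal" where
  "vstar D c A a b = (INF p \<in> feasS A a b. ereal (frob D (fst p) + 2 * (c \<bullet> snd p)))"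

text \<open>Nonempty interior of the feasible region of (S), interior taken in the space
  of (symmetric matrix, vector) pairs.\<close>
definition feasS_nonempty_interior :: "('m \<Rightarrow> real^'n^'n) \<Rightarrow> ('m \<Rightarrow> real^'n) \<Rightarrow> ('m \<Rightarrow> real) \<Rightarrow> bool" where
  "feasS_nonempty_interior A a b \<longleftrightarrow>
     (\<exists>X0 x0 e. e > 0 \<and> (X0, x0) \<in> feasS A a b \<and>
        (\<forall>X x. symmetric_mat X \<and> dist X X0 < e \<and> dist x x0 < e \<longrightarrow> (X, x) \<in> feasS A a b))"

definition assumption1 :: "('m::finite \<Rightarrow> real^'n^'n) \<Rightarrow> ('m \<Rightarrow> real^'n) \<Rightarrow> ('m \<Rightarrow> real) \<Rightarrow> bool" where
  "assumption1 A a b \<longleftrightarrow>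
     feasP A a b \<noteq> {} \<and>
     (\<exists>y::'m \<Rightarrow> real. (\<forall>i. y i \<ge> 0) \<and> pd (\<Sum>i\<in>UNIV. y i *\<^sub>R A i)) \<and>
     feasS_nonempty_interior A a b"

end

theory Submission
  imports Defs
begin

text \<open>
With A^i = xi_i I the constraints of (S) see X only through its trace s, and after writing
D = d* I + diag(delta) with delta >= 0, the psd condition X_jj >= x_j^2 shows that (S) is bounded
below by the convex problem of minimising sum_j delta_j x_j^2 + 2 c'x + d* s over
{(x, s). xi_i s + 2 a_i'x <= b_i, x'x <= s}. A positive combination of the xi_i makes this region
compact, so a minimiser (x, s) exists. If x'x < s, only the linear constraints can be active, so
the KKT conditions hold with multipliers mu >= 0 (Farkas); since delta_j > 0 for j <> j1 they
determine x_j = -(c_j + sum_l mu_l a_lj)/delta_j, and (mu, x_j1, s - sum_{j<>j1} x_j^2) solves the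
excluded system. Hence x'x = s, x is feasible for (P), and c* <= v*; the reverse inequality is
the lifting x |-> (x x', x).
\<close>

lemma nonneg_combination_in_convex_cone_hull:
  fixes g :: "'m::finite \<Rightarrow> 'a::real_vector"
  assumes "\<forall>i. \<mu> i \<ge> 0"
  shows "(\<Sum>i\<in>S. \<mu> i *\<^sub>R g i) \<in> convex_cone hull (range g)"
proof (induction S rule: infinite_finite_induct)
  case (insert i F)
  have "\<mu> i *\<^sub>R g i \<in> convex_cone hull (range g)"
    by (rule convex_cone_hull_mul) (auto simp: hull_inc assms)
  with insert show ?case by (simp add: convex_cone_hull_add)
qed (simp_all add: convex_cone_hull_contains_0)

lemma convex_cone_hull_finite_range:
  fixes g :: "'m::finite \<Rightarrow> 'a::real_vector"
  shows "convex_cone hull (range g) = {\<Sum>i\<in>UNIV. \<mu> i *\<^sub>R g i | \<mu>. \<forall>i. \<mu> i \<ge> 0}"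
    (is "_ = ?K")
proof (rule hull_unique)
  show "range g \<subseteq> ?K"
  proof (rule image_subsetI)
    fix k
    have "(\<Sum>i\<in>UNIV. (if i = k then 1 else 0) *\<^sub>R g i) = g k"
      by (simp add: if_distrib[of "\<lambda>t. t *\<^sub>R _"] cong: if_cong)
    then show "g k \<in> ?K"
      by (intro CollectI exI[of _ "\<lambda>i. if i = k then 1 else 0"]) auto
  qed
  show "convex_cone ?K"
    unfolding convex_cone_iff
  proof (intro conjI ballI allI impI)
    show "0 \<in> ?K" by (intro CollectI exI[of _ "\<lambda>_. 0"]) simp
  next
    fix x y assume "x \<in> ?K" "y \<in> ?K"
    then obtain \<mu> \<nu> where "\<forall>i. \<mu> i \<ge> 0" "x = (\<Sum>i\<in>UNIV. \<mu> i *\<^sub>R g i)"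
      "\<forall>i. \<nu> i \<ge> 0" "y = (\<Sum>i\<in>UNIV. \<nu> i *\<^sub>R g i)" by auto
    then show "x + y \<in> ?K"
      by (intro CollectI exI[of _ "\<lambda>i. \<mu> i + \<nu> i"]) (auto simp: sum.distrib scaleR_add_left)
  next
    fix x and t :: real assume "x \<in> ?K" "0 \<le> t"
    then obtain \<mu> where "\<forall>i. \<mu> i \<ge> 0" "x = (\<Sum>i\<in>UNIV. \<mu> i *\<^sub>R g i)" by auto
    with \<open>0 \<le> t\<close> show "t *\<^sub>R x \<in> ?K"
      by (intro CollectI exI[of _ "\<lambda>i. t * \<mu> i"]) (auto simp: scaleR_sum_right)
  qed
  show "?K \<subseteq> T" if "range g \<subseteq> T" "convex_cone T" for T
    using nonneg_combination_in_convex_cone_hull hull_minimal[of "range g" T convex_cone] that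
    by blast
qed

lemma farkas_alternative:
  fixes g :: "'m::finite \<Rightarrow> 'a::euclidean_space"
  assumes "\<nexists>\<mu>. (\<forall>i. \<mu> i \<ge> 0) \<and> z = (\<Sum>i\<in>UNIV. \<mu> i *\<^sub>R g i)"
  obtains e where "\<forall>i. e \<bullet> g i \<le> 0" "0 < e \<bullet> z"
proof -
  let ?K = "convex_cone hull (range g)"
  have "z \<notin> ?K" using assms unfolding convex_cone_hull_finite_range by blast
  moreover have "closed ?K" by (rule closed_convex_cone_hull) simp
  ultimately obtain v t where sep: "v \<bullet> z < t" "\<forall>x\<in>?K. t < v \<bullet> x"
    using separating_hyperplane_closed_point[OF convex_convex_cone_hull] by metis
  have "t < v \<bullet> 0" using sep(2) convex_cone_hull_contains_0 by blast
  then have "t < 0" by simp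
  have "0 \<le> v \<bullet> g i" for i
  proof (rule ccontr)
    assume neg: "\<not> 0 \<le> v \<bullet> g i"
    with \<open>t < 0\<close> have "(t / (v \<bullet> g i)) *\<^sub>R g i \<in> ?K"
      by (intro convex_cone_hull_mul hull_inc) (simp_all add: divide_nonpos_neg)
    with sep(2) have "t < v \<bullet> ((t / (v \<bullet> g i)) *\<^sub>R g i)" by blast
    with neg show False by simp
  qed
  then have "\<forall>i. - v \<bullet> g i \<le> 0" by simp
  moreover have "0 < - v \<bullet> z" using sep(1) \<open>t < 0\<close> by simp
  ultimately show thesis by (rule that)
qed

lemma sum_diagonal_mat_row:
  "diagonal_mat P \<Longrightarrow> (\<Sum>k\<in>UNIV. P $ i $ k * f k) = P $ i $ i * f i"
  by (subst sum.remove[of _ i]) (auto simp: diagonal_mat_def intro!: sum.neutral)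

lemma frob_diagonal:
  "diagonal_mat P \<Longrightarrow> frob P X = (\<Sum>j\<in>UNIV. P $ j $ j * X $ j $ j)"
  by (simp add: frob_def trace_def matrix_matrix_mult_def sum_diagonal_mat_row)

lemma quadratic_form_diagonal:
  "diagonal_mat P \<Longrightarrow> x \<bullet> (P *v x) = (\<Sum>j\<in>UNIV. P $ j $ j * (x $ j)\<^sup>2)"
  by (simp add: inner_vec_def matrix_vector_mult_def sum_diagonal_mat_row)
     (simp add: power2_eq_square mult_ac)

lemma frob_outer_self: "frob P (outer x x) = x \<bullet> (P *v x)"
  unfolding frob_def trace_def matrix_matrix_mult_def outer_def inner_vec_def matrix_vector_mult_def
  by (simp add: sum_distrib_left mult_ac)

lemma symmetric_outer_self: "symmetric_mat (outer x x)"
  by (simp add: symmetric_mat_def outer_def transpose_def mult.commute)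

lemma inner_axis_mult_axis: "axis j 1 \<bullet> (M *v axis j 1) = M $ j $ j"
  unfolding matrix_vector_mult_basis column_def
  by (metis cart_eq_inner_axis inner_commute vec_lambda_beta)

lemma psd_diag_nonneg: "psd M \<Longrightarrow> 0 \<le> M $ j $ j"
  unfolding psd_def by (metis inner_axis_mult_axis)

lemma psd_sub_outer_self_diag: "psd (X - outer x x) \<Longrightarrow> (x $ j)\<^sup>2 \<le> X $ j $ j"
  using psd_diag_nonneg[of "X - outer x x" j] by (simp add: outer_def power2_eq_square)

lemma psd_zero: "psd (0 :: real^'n^'n)"
  by (simp add: psd_def symmetric_mat_def transpose_def vec_eq_iff)

lemma qf_scalar: "qf (\<xi> *\<^sub>R mat 1) q x = \<xi> * (x \<bullet> x) + 2 * (q \<bullet> x)"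
  by (simp add: qf_def flip: scaleR_matrix_vector_assoc)

lemma frob_scalar: "frob (\<xi> *\<^sub>R mat 1) X = \<xi> * trace X"
  by (simp add: frob_def trace_def sum_distrib_left flip: scalar_matrix_assoc)

lemma pd_scalar_imp_pos:
  assumes "pd (\<xi> *\<^sub>R mat 1 :: real^'n^'n)"
  shows "0 < \<xi>"
proof -
  fix j :: 'n
  have "axis j 1 \<noteq> (0 :: real^'n)" by (simp add: axis_eq_0_iff)
  with assms have "0 < axis j 1 \<bullet> ((\<xi> *\<^sub>R mat 1 :: real^'n^'n) *v axis j 1)"
    unfolding pd_def by blast
  then show ?thesis by (simp add: inner_axis_mult_axis mat_def)
qed

lemma quadratic_bound:
  fixes \<eta> B C t :: real
  assumes "0 < \<eta>" "0 \<le> B" "0 \<le> C" "0 \<le> t" "\<eta> * t\<^sup>2 \<le> B + C * t"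
  shows "t \<le> 1 + (B + C) / \<eta>"
proof (cases "t \<le> 1")
  case True
  with assms show ?thesis by (simp add: add_increasing2)
next
  case False
  with assms have "B * 1 \<le> B * t" by (intro mult_left_mono) auto
  with assms(5) have "\<eta> * t * t \<le> (B + C) * t"
    by (simp add: power2_eq_square algebra_simps)
  with False have "\<eta> * t \<le> B + C" by simp
  with assms have "t \<le> (B + C) / \<eta>" by (simp add: pos_le_divide_eq mult.commute)
  then show ?thesis by linarith
qed

text \<open>Here s plays the role of trace X in (S).\<close>
definition trace_relax_feas ::
    "('m \<Rightarrow> real) \<Rightarrow> ('m \<Rightarrow> real^'n) \<Rightarrow> ('m \<Rightarrow> real) \<Rightarrow> ((real^'n) \<times> real) set" where
  "trace_relax_feas \<xi> a b = {(x, s). (\<forall>i. \<xi> i * s + 2 * (a i \<bullet> x) \<le> b i) \<and> x \<bullet> x \<le> s}"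

definition trace_relax_obj :: "('n \<Rightarrow> real) \<Rightarrow> real^'n \<Rightarrow> real \<Rightarrow> real^'n \<Rightarrow> real \<Rightarrow> real" where
  "trace_relax_obj \<delta> c d x s = (\<Sum>j\<in>UNIV. \<delta> j * (x $ j)\<^sup>2) + 2 * (c \<bullet> x) + d * s"

lemma closed_trace_relax_feas: "closed (trace_relax_feas \<xi> a b)"
proof -
  have "trace_relax_feas \<xi> a b
      = {p. (\<forall>i. \<xi> i * snd p + 2 * (a i \<bullet> fst p) \<le> b i) \<and> fst p \<bullet> fst p \<le> snd p}"
    by (auto simp: trace_relax_feas_def)
  then show ?thesis
    by (simp only:) (intro closed_Collect_conj closed_Collect_all closed_Collect_le continuous_intros)
qed

lemma bounded_trace_relax_feas:
  assumes y: "\<forall>i. 0 \<le> y i" and pos: "0 < (\<Sum>i\<in>UNIV. y i * \<xi> i)"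
  shows "bounded (trace_relax_feas \<xi> a b)"
proof -
  define \<eta> where "\<eta> = (\<Sum>i\<in>UNIV. y i * \<xi> i)"
  define \<alpha> where "\<alpha> = (\<Sum>i\<in>UNIV. y i *\<^sub>R a i)"
  define \<beta> where "\<beta> = (\<Sum>i\<in>UNIV. y i * b i)"
  define R where "R = 1 + (\<bar>\<beta>\<bar> + 2 * norm \<alpha>) / \<eta>"
  have "trace_relax_feas \<xi> a b \<subseteq> cball 0 R \<times> cball 0 ((\<bar>\<beta>\<bar> + 2 * norm \<alpha> * R) / \<eta>)"
  proof (rule subrelI)
    fix x s assume "(x, s) \<in> trace_relax_feas \<xi> a b"
    then have lin: "\<forall>i. \<xi> i * s + 2 * (a i \<bullet> x) \<le> b i" and quad: "(norm x)\<^sup>2 \<le> s"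
      by (auto simp: trace_relax_feas_def power2_norm_eq_inner)
    have "(\<Sum>i\<in>UNIV. y i * (\<xi> i * s + 2 * (a i \<bullet> x))) \<le> \<beta>"
      unfolding \<beta>_def using lin y by (intro sum_mono mult_left_mono) auto
    then have "\<eta> * s + 2 * (\<alpha> \<bullet> x) \<le> \<beta>"
      by (simp add: \<eta>_def \<alpha>_def algebra_simps sum.distrib sum_distrib_left sum_distrib_right inner_sum_left)
    moreover have "- (norm \<alpha> * norm x) \<le> \<alpha> \<bullet> x"
      using norm_cauchy_schwarz[of "- \<alpha>" x] by simp
    ultimately have agg: "\<eta> * s \<le> \<bar>\<beta>\<bar> + 2 * norm \<alpha> * norm x" by linarith
    moreover have "\<eta> * (norm x)\<^sup>2 \<le> \<eta> * s" using quad pos by (simp add: \<eta>_def)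
    ultimately have "\<eta> * (norm x)\<^sup>2 \<le> \<bar>\<beta>\<bar> + 2 * norm \<alpha> * norm x" by linarith
    then have "norm x \<le> R"
      unfolding R_def using pos by (intro quadratic_bound) (simp_all add: \<eta>_def)
    then have "2 * norm \<alpha> * norm x \<le> 2 * norm \<alpha> * R" by (simp add: mult_left_mono)
    with agg have "\<eta> * s \<le> \<bar>\<beta>\<bar> + 2 * norm \<alpha> * R" by linarith
    then have "s \<le> (\<bar>\<beta>\<bar> + 2 * norm \<alpha> * R) / \<eta>"
      using pos by (simp add: \<eta>_def pos_le_divide_eq mult.commute)
    moreover have "0 \<le> s" using quad zero_le_power2[of "norm x"] by linarith
    ultimately show "(x, s) \<in> cball 0 R \<times> cball 0 ((\<bar>\<beta>\<bar> + 2 * norm \<alpha> * R) / \<eta>)"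
      using \<open>norm x \<le> R\<close> by simp
  qed
  then show ?thesis by (rule bounded_subset[OF bounded_Times[OF bounded_cball bounded_cball]])
qed

lemma trace_relax_has_minimizer:
  assumes "\<forall>i. 0 \<le> y i" "0 < (\<Sum>i\<in>UNIV. y i * \<xi> i)" "trace_relax_feas \<xi> a b \<noteq> {}"
  obtains x s where "(x, s) \<in> trace_relax_feas \<xi> a b"
    "\<forall>(x', s') \<in> trace_relax_feas \<xi> a b. trace_relax_obj \<delta> c d x s \<le> trace_relax_obj \<delta> c d x' s'"
proof -
  have "bounded (trace_relax_feas \<xi> a b)" by (rule bounded_trace_relax_feas[OF assms(1,2)])
  then have "compact (trace_relax_feas \<xi> a b)"
    by (simp add: compact_eq_bounded_closed closed_trace_relax_feas)
  moreover have "continuous_on (trace_relax_feas \<xi> a b) (\<lambda>p. trace_relax_obj \<delta> c d (fst p) (snd p))"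
    unfolding trace_relax_obj_def by (intro continuous_intros)
  ultimately obtain p where "p \<in> trace_relax_feas \<xi> a b"
    "\<forall>q\<in>trace_relax_feas \<xi> a b. trace_relax_obj \<delta> c d (fst p) (snd p) \<le> trace_relax_obj \<delta> c d (fst q) (snd q)"
    using continuous_attains_inf assms(3) by blast
  then show thesis by (intro that[of "fst p" "snd p"]) auto
qed

lemma trace_relax_obj_along_line:
  "trace_relax_obj \<delta> c d (x + t *\<^sub>R u) (s + t * r)
     = trace_relax_obj \<delta> c d x s
       + t * ((\<Sum>j\<in>UNIV. 2 * (\<delta> j * x $ j + c $ j) * u $ j) + d * r)
       + t\<^sup>2 * (\<Sum>j\<in>UNIV. \<delta> j * (u $ j)\<^sup>2)"
proof -
  have "\<delta> j * ((x + t *\<^sub>R u) $ j)\<^sup>2 + 2 * (c $ j * (x + t *\<^sub>R u) $ j)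
     = (\<delta> j * (x $ j)\<^sup>2 + 2 * (c $ j * x $ j)) + t * (2 * (\<delta> j * x $ j + c $ j) * u $ j)
       + t\<^sup>2 * (\<delta> j * (u $ j)\<^sup>2)" for j
    by (simp add: power2_eq_square algebra_simps)
  then have "(\<Sum>j\<in>UNIV. \<delta> j * ((x + t *\<^sub>R u) $ j)\<^sup>2 + 2 * (c $ j * (x + t *\<^sub>R u) $ j))
     = (\<Sum>j\<in>UNIV. (\<delta> j * (x $ j)\<^sup>2 + 2 * (c $ j * x $ j)) + t * (2 * (\<delta> j * x $ j + c $ j) * u $ j)
       + t\<^sup>2 * (\<delta> j * (u $ j)\<^sup>2))" by simp
  then show ?thesis
    by (simp add: trace_relax_obj_def inner_vec_def sum.distrib sum_distrib_left algebra_simps)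
qed

lemma eventually_descent_and_slack_at_right:
  fixes x u :: "real^'n"
  assumes "x \<bullet> x < s" "G < 0"
  shows "\<forall>\<^sub>F t in at_right 0. G + t * Q < 0 \<and> (x + t *\<^sub>R u) \<bullet> (x + t *\<^sub>R u) < s + t * r \<and> 0 < t"
proof (intro eventually_conj)
  have "((\<lambda>t. G + t * Q) \<longlongrightarrow> G + 0 * Q) (at_right 0)"
    by (intro tendsto_intros)
  moreover have "G + 0 * Q < 0" using assms(2) by simp
  ultimately show "\<forall>\<^sub>F t in at_right 0. G + t * Q < 0"
    by (rule order_tendstoD(2))
  have "((\<lambda>t. (s + t * r) - (x + t *\<^sub>R u) \<bullet> (x + t *\<^sub>R u))
      \<longlongrightarrow> (s + 0 * r) - (x + 0 *\<^sub>R u) \<bullet> (x + 0 *\<^sub>R u)) (at_right 0)"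
    by (intro tendsto_intros)
  moreover have "0 < (s + 0 * r) - (x + 0 *\<^sub>R u) \<bullet> (x + 0 *\<^sub>R u)" using assms(1) by simp
  ultimately have "\<forall>\<^sub>F t in at_right 0. 0 < (s + t * r) - (x + t *\<^sub>R u) \<bullet> (x + t *\<^sub>R u)"
    by (rule order_tendstoD(1))
  then show "\<forall>\<^sub>F t in at_right 0. (x + t *\<^sub>R u) \<bullet> (x + t *\<^sub>R u) < s + t * r"
    by (rule eventually_mono) simp
  show "\<forall>\<^sub>F t in at_right 0. (0::real) < t"
    by (simp add: eventually_at_right_less)
qed

lemma trace_relax_descent:
  assumes feas: "(x, s) \<in> trace_relax_feas \<xi> a b" and slack: "x \<bullet> x < s"
    and dir: "\<forall>i. 2 * (a i \<bullet> u) + \<xi> i * r \<le> 0"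
    and desc: "(\<Sum>j\<in>UNIV. 2 * (\<delta> j * x $ j + c $ j) * u $ j) + d * r < 0"
  obtains t where "(x + t *\<^sub>R u, s + t * r) \<in> trace_relax_feas \<xi> a b"
    "trace_relax_obj \<delta> c d (x + t *\<^sub>R u) (s + t * r) < trace_relax_obj \<delta> c d x s"
proof -
  define G where "G = (\<Sum>j\<in>UNIV. 2 * (\<delta> j * x $ j + c $ j) * u $ j) + d * r"
  define Q where "Q = (\<Sum>j\<in>UNIV. \<delta> j * (u $ j)\<^sup>2)"
  obtain t where t: "G + t * Q < 0" "(x + t *\<^sub>R u) \<bullet> (x + t *\<^sub>R u) < s + t * r" "0 < t"
    using eventually_happens'[OF trivial_limit_at_right_real eventually_descent_and_slack_at_right[OF slack]]
      desc unfolding G_def by blast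
  have "\<xi> i * (s + t * r) + 2 * (a i \<bullet> (x + t *\<^sub>R u)) \<le> b i" for i
  proof -
    have "\<xi> i * s + 2 * (a i \<bullet> x) \<le> b i" using feas by (simp add: trace_relax_feas_def)
    moreover have "t * (2 * (a i \<bullet> u) + \<xi> i * r) \<le> 0"
      using dir \<open>0 < t\<close> by (simp add: mult_nonneg_nonpos)
    ultimately show ?thesis by (simp add: inner_add_right algebra_simps)
  qed
  with t(2) have feas_t: "(x + t *\<^sub>R u, s + t * r) \<in> trace_relax_feas \<xi> a b"
    by (simp add: trace_relax_feas_def)
  have "trace_relax_obj \<delta> c d (x + t *\<^sub>R u) (s + t * r)
      = trace_relax_obj \<delta> c d x s + t * G + t\<^sup>2 * Q"
    unfolding G_def Q_def by (rule trace_relax_obj_along_line)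
  moreover have "t * G + t\<^sup>2 * Q < 0"
    using mult_pos_neg[OF t(3) t(1)] by (simp add: power2_eq_square algebra_simps)
  ultimately have "trace_relax_obj \<delta> c d (x + t *\<^sub>R u) (s + t * r) < trace_relax_obj \<delta> c d x s"
    by linarith
  with feas_t show thesis by (rule that)
qed

text \<open>In the variables (x, s), (2 a_i, xi_i) is the gradient of the i-th linear constraint and
  ((2 (delta_j x_j + c_j))_j, d) that of the objective.\<close>
lemma nonneg_gradient_combination_iff:
  fixes a :: "'m::finite \<Rightarrow> real^'n"
  shows "- ((\<chi> j. 2 * (\<delta> j * x $ j + c $ j)), d) = (\<Sum>i\<in>UNIV. \<mu> i *\<^sub>R (2 *\<^sub>R a i, \<xi> i))
    \<longleftrightarrow> d + (\<Sum>i\<in>UNIV. \<mu> i * \<xi> i) = 0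
      \<and> (\<forall>j. \<delta> j * x $ j + c $ j + (\<Sum>l\<in>UNIV. \<mu> l * a l $ j) = 0)"
    (is "?z = ?comb \<longleftrightarrow> _")
proof -
  have "fst ?comb = 2 *\<^sub>R (\<Sum>i\<in>UNIV. \<mu> i *\<^sub>R a i)"
    by (simp add: fst_sum scaleR_sum_right mult.commute)
  then have "fst ?z $ j = fst ?comb $ j
      \<longleftrightarrow> \<delta> j * x $ j + c $ j + (\<Sum>l\<in>UNIV. \<mu> l * a l $ j) = 0" for j
    by (simp add: sum_component) linarith
  moreover have "snd ?z = snd ?comb \<longleftrightarrow> d + (\<Sum>i\<in>UNIV. \<mu> i * \<xi> i) = 0"
    by (auto simp: snd_sum)
  ultimately show ?thesis unfolding prod_eq_iff vec_eq_iff by blast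
qed

lemma trace_relax_KKT:
  fixes a :: "'m::finite \<Rightarrow> real^'n"
  assumes feas: "(x, s) \<in> trace_relax_feas \<xi> a b" and slack: "x \<bullet> x < s"
    and min: "\<forall>(x', s') \<in> trace_relax_feas \<xi> a b.
                trace_relax_obj \<delta> c d x s \<le> trace_relax_obj \<delta> c d x' s'"
  obtains \<mu> where "\<forall>i. 0 \<le> \<mu> i" "d + (\<Sum>i\<in>UNIV. \<mu> i * \<xi> i) = 0"
    "\<forall>j. \<delta> j * x $ j + c $ j + (\<Sum>l\<in>UNIV. \<mu> l * a l $ j) = 0"
proof (cases "\<exists>\<mu>. (\<forall>i. 0 \<le> \<mu> i) \<and> - ((\<chi> j. 2 * (\<delta> j * x $ j + c $ j)), d)
                    = (\<Sum>i\<in>UNIV. \<mu> i *\<^sub>R (2 *\<^sub>R a i, \<xi> i))")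
  case True
  with nonneg_gradient_combination_iff that show thesis by blast
next
  case False
  then obtain e where e: "\<forall>i. e \<bullet> (2 *\<^sub>R a i, \<xi> i) \<le> 0"
    "0 < e \<bullet> - ((\<chi> j. 2 * (\<delta> j * x $ j + c $ j)), d)"
    by (rule farkas_alternative)
  obtain u r where "e = (u, r)" by fastforce
  with e have ur: "\<forall>i. (u, r) \<bullet> (2 *\<^sub>R a i, \<xi> i) \<le> 0"
    "0 < (u, r) \<bullet> - ((\<chi> j. 2 * (\<delta> j * x $ j + c $ j)), d)" by simp_all
  obtain t where t: "(x + t *\<^sub>R u, s + t * r) \<in> trace_relax_feas \<xi> a b"
    "trace_relax_obj \<delta> c d (x + t *\<^sub>R u) (s + t * r) < trace_relax_obj \<delta> c d x s"
  proof (rule trace_relax_descent[OF feas slack])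
    show "\<forall>i. 2 * (a i \<bullet> u) + \<xi> i * r \<le> 0"
      using ur(1) by (simp add: inner_commute mult.commute)
    show "(\<Sum>j\<in>UNIV. 2 * (\<delta> j * x $ j + c $ j) * u $ j) + d * r < 0"
      using ur(2) unfolding inner_minus_right by (simp add: inner_vec_def mult.commute)
  qed
  with bspec[OF min t(1)] show thesis by simp
qed

text \<open>The system excluded by the theorem, with d* written d and D_jj - d* written delta_j.\<close>
definition shor_gap_system ::
    "('m \<Rightarrow> real) \<Rightarrow> ('m \<Rightarrow> real^'n) \<Rightarrow> ('m \<Rightarrow> real) \<Rightarrow> real^'n \<Rightarrow> ('n \<Rightarrow> real) \<Rightarrow> real \<Rightarrow> 'n
      \<Rightarrow> ('m \<Rightarrow> real) \<Rightarrow> real \<Rightarrow> real \<Rightarrow> bool" where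
  "shor_gap_system \<xi> a b c \<delta> d j1 \<mu> xj1 zj1 \<longleftrightarrow>
     (let w = (\<lambda>j. (c $ j + (\<Sum>l\<in>UNIV. \<mu> l * a l $ j)) / \<delta> j) in
      d + (\<Sum>i\<in>UNIV. \<mu> i * \<xi> i) = 0 \<and>
      c $ j1 + (\<Sum>i\<in>UNIV. \<mu> i * a i $ j1) = 0 \<and>
      (\<forall>i. \<xi> i * zj1 + (\<Sum>j\<in>UNIV - {j1}. \<xi> i * (w j)\<^sup>2) + 2 * a i $ j1 * xj1
             - 2 * (\<Sum>j\<in>UNIV - {j1}. a i $ j * w j) \<le> b i) \<and>
      xj1\<^sup>2 \<le> zj1 \<and>
      (\<forall>i. \<mu> i \<ge> 0))"

lemma KKT_point_solves_shor_gap_system: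
  fixes x :: "real^'n"
  assumes feas: "(x, s) \<in> trace_relax_feas \<xi> a b"
    and \<delta>: "\<delta> j1 = 0" "\<forall>j. j \<noteq> j1 \<longrightarrow> 0 < \<delta> j"
    and \<mu>: "\<forall>i. 0 \<le> \<mu> i" "d + (\<Sum>i\<in>UNIV. \<mu> i * \<xi> i) = 0"
    and stat: "\<forall>j. \<delta> j * x $ j + c $ j + (\<Sum>l\<in>UNIV. \<mu> l * a l $ j) = 0"
  shows "shor_gap_system \<xi> a b c \<delta> d j1 \<mu> (x $ j1) (s - (\<Sum>j\<in>UNIV - {j1}. (x $ j)\<^sup>2))"
proof -
  define w where "w j = (c $ j + (\<Sum>l\<in>UNIV. \<mu> l * a l $ j)) / \<delta> j" for j
  have w: "w j = - x $ j" if "j \<in> UNIV - {j1}" for j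
  proof -
    have "c $ j + (\<Sum>l\<in>UNIV. \<mu> l * a l $ j) = - (\<delta> j * x $ j)"
      using stat[rule_format, of j] by linarith
    moreover have "\<delta> j \<noteq> 0" using \<delta>(2) that by force
    ultimately show ?thesis by (simp add: w_def)
  qed
  have lin: "\<xi> i * s + 2 * (a i \<bullet> x) \<le> b i" and quad: "x \<bullet> x \<le> s" for i
    using feas by (auto simp: trace_relax_feas_def)
  have split_j1: "v \<bullet> x = v $ j1 * x $ j1 + (\<Sum>j\<in>UNIV - {j1}. v $ j * x $ j)" for v :: "real^'n"
    unfolding inner_vec_def by (simp add: sum.remove)
  have "\<xi> i * (s - (\<Sum>j\<in>UNIV - {j1}. (x $ j)\<^sup>2)) + (\<Sum>j\<in>UNIV - {j1}. \<xi> i * (w j)\<^sup>2)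
        + 2 * a i $ j1 * x $ j1 - 2 * (\<Sum>j\<in>UNIV - {j1}. a i $ j * w j)
      = \<xi> i * s + 2 * (a i \<bullet> x)" for i
  proof -
    have "(\<Sum>j\<in>UNIV - {j1}. \<xi> i * (w j)\<^sup>2) = \<xi> i * (\<Sum>j\<in>UNIV - {j1}. (x $ j)\<^sup>2)"
      unfolding sum_distrib_left by (rule sum.cong) (simp_all add: w)
    moreover have "(\<Sum>j\<in>UNIV - {j1}. a i $ j * w j) = - (\<Sum>j\<in>UNIV - {j1}. a i $ j * x $ j)"
      unfolding sum_negf[symmetric] by (rule sum.cong) (simp_all add: w)
    ultimately show ?thesis by (simp add: split_j1[of "a i"] algebra_simps)
  qed
  moreover have "(x $ j1)\<^sup>2 \<le> s - (\<Sum>j\<in>UNIV - {j1}. (x $ j)\<^sup>2)"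
    using quad split_j1[of x] by (simp add: power2_eq_square)
  ultimately show ?thesis
    using \<mu> stat[rule_format, of j1] \<delta>(1) lin
    by (simp add: shor_gap_system_def w_def[symmetric])
qed

lemma trace_relax_minimizer_tight:
  fixes a :: "'m::finite \<Rightarrow> real^'n"
  assumes feas: "(x, s) \<in> trace_relax_feas \<xi> a b"
    and min: "\<forall>(x', s') \<in> trace_relax_feas \<xi> a b.
                trace_relax_obj \<delta> c d x s \<le> trace_relax_obj \<delta> c d x' s'"
    and \<delta>: "\<delta> j1 = 0" "\<forall>j. j \<noteq> j1 \<longrightarrow> 0 < \<delta> j"
    and no_sol: "\<nexists>\<mu> xj1 zj1. shor_gap_system \<xi> a b c \<delta> d j1 \<mu> xj1 zj1"
  shows "s = x \<bullet> x"
proof (rule ccontr)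
  assume "s \<noteq> x \<bullet> x"
  with feas have "x \<bullet> x < s" by (simp add: trace_relax_feas_def)
  then obtain \<mu> where "\<forall>i. 0 \<le> \<mu> i" "d + (\<Sum>i\<in>UNIV. \<mu> i * \<xi> i) = 0"
    "\<forall>j. \<delta> j * x $ j + c $ j + (\<Sum>l\<in>UNIV. \<mu> l * a l $ j) = 0"
    using trace_relax_KKT[OF feas _ min] by blast
  with KKT_point_solves_shor_gap_system[OF feas \<delta>] no_sol show False by blast
qed

lemma feasP_scalar_iff:
  "x \<in> feasP (\<lambda>i. \<xi> i *\<^sub>R mat 1) a b \<longleftrightarrow> (x, x \<bullet> x) \<in> trace_relax_feas \<xi> a b"
  by (simp add: feasP_def trace_relax_feas_def qf_scalar)

lemma qf_diagonal_eq_trace_relax_obj: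
  assumes "diagonal_mat D"
  shows "qf D c x = trace_relax_obj (\<lambda>j. D $ j $ j - d) c d x (x \<bullet> x)"
  unfolding qf_def quadratic_form_diagonal[OF assms]
  by (simp add: trace_relax_obj_def inner_vec_def power2_eq_square algebra_simps sum_subtractf
      sum_distrib_left)

lemma feasS_scalar_imp_trace_relax:
  assumes S: "(X, x) \<in> feasS (\<lambda>i. \<xi> i *\<^sub>R mat 1) a b"
    and D: "diagonal_mat D" "\<forall>j. d \<le> D $ j $ j"
  shows "(x, trace X) \<in> trace_relax_feas \<xi> a b"
    and "trace_relax_obj (\<lambda>j. D $ j $ j - d) c d x (trace X) \<le> frob D X + 2 * (c \<bullet> x)"
proof -
  have diag: "(x $ j)\<^sup>2 \<le> X $ j $ j" for j
    using S psd_sub_outer_self_diag by (auto simp: feasS_def)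
  then have "x \<bullet> x \<le> trace X"
    unfolding trace_def by (simp add: inner_vec_def power2_eq_square sum_mono)
  with S show "(x, trace X) \<in> trace_relax_feas \<xi> a b"
    by (simp add: feasS_def trace_relax_feas_def frob_scalar)
  have "frob D X = (\<Sum>j\<in>UNIV. (D $ j $ j - d) * X $ j $ j) + d * trace X"
    using D(1) by (simp add: frob_diagonal trace_def algebra_simps sum_subtractf sum_distrib_left)
  moreover have "(\<Sum>j\<in>UNIV. (D $ j $ j - d) * (x $ j)\<^sup>2) \<le> (\<Sum>j\<in>UNIV. (D $ j $ j - d) * X $ j $ j)"
    using D(2) diag by (intro sum_mono mult_left_mono) auto
  ultimately show "trace_relax_obj (\<lambda>j. D $ j $ j - d) c d x (trace X) \<le> frob D X + 2 * (c \<bullet> x)"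
    by (simp add: trace_relax_obj_def)
qed

lemma vstar_le_cstar: "vstar D c A a b \<le> cstar D c A a b"
  unfolding cstar_def
proof (rule INF_greatest)
  fix x assume "x \<in> feasP A a b"
  then have "(outer x x, x) \<in> feasS A a b"
    by (simp add: feasS_def feasP_def qf_def frob_outer_self symmetric_outer_self psd_zero)
  then have "vstar D c A a b \<le> ereal (frob D (outer x x) + 2 * (c \<bullet> x))"
    unfolding vstar_def by (metis (no_types, lifting) INF_lower fst_conv snd_conv)
  then show "vstar D c A a b \<le> ereal (qf D c x)" by (simp add: qf_def frob_outer_self)
qed

lemma cstar_le_vstar_if_tight_minimizer:
  assumes D: "diagonal_mat D" "\<forall>j. d \<le> D $ j $ j"
    and x: "(x, x \<bullet> x) \<in> trace_relax_feas \<xi> a b"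
    and min: "\<forall>(x', s') \<in> trace_relax_feas \<xi> a b. trace_relax_obj (\<lambda>j. D $ j $ j - d) c d x (x \<bullet> x)
                \<le> trace_relax_obj (\<lambda>j. D $ j $ j - d) c d x' s'"
  shows "cstar D c (\<lambda>i. \<xi> i *\<^sub>R mat 1) a b \<le> vstar D c (\<lambda>i. \<xi> i *\<^sub>R mat 1) a b"
  unfolding vstar_def
proof (rule INF_greatest)
  fix p assume p: "p \<in> feasS (\<lambda>i. \<xi> i *\<^sub>R mat 1) a b"
  obtain X y where p_eq: "p = (X, y)" by fastforce
  have "qf D c x \<le> trace_relax_obj (\<lambda>j. D $ j $ j - d) c d y (trace X)"
    using bspec[OF min feasS_scalar_imp_trace_relax(1)[OF p[unfolded p_eq] D]]
    by (simp add: qf_diagonal_eq_trace_relax_obj[OF D(1), of c x d])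
  also have "\<dots> \<le> frob D X + 2 * (c \<bullet> y)"
    by (rule feasS_scalar_imp_trace_relax(2)[OF p[unfolded p_eq] D])
  finally have "ereal (qf D c x) \<le> ereal (frob D (fst p) + 2 * (c \<bullet> snd p))"
    by (simp add: p_eq)
  moreover have "cstar D c (\<lambda>i. \<xi> i *\<^sub>R mat 1) a b \<le> ereal (qf D c x)"
    unfolding cstar_def using x by (intro INF_lower) (simp add: feasP_scalar_iff)
  ultimately show "cstar D c (\<lambda>i. \<xi> i *\<^sub>R mat 1) a b \<le> ereal (frob D (fst p) + 2 * (c \<bullet> snd p))"
    by (rule order_trans[rotated])
qed

theorem mainTheorem7:
  fixes D :: "real^'n^'n" and c :: "real^'n"
    and A :: "'m::finite \<Rightarrow> real^'n^'n" and a :: "'m \<Rightarrow> real^'n" and b :: "'m \<Rightarrow> real"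
    and \<xi> :: "'m \<Rightarrow> real" and j1 :: 'n
  assumes D_diag: "diagonal_mat D"
    and A_diag: "\<forall>i. diagonal_mat (A i)"
    and asm1: "assumption1 A a b"
    and A_scalar: "\<forall>i. A i = \<xi> i *\<^sub>R mat 1"
    and j1_min: "D $ j1 $ j1 = (MIN j. D $ j $ j)"
    and j1_unique: "\<forall>j. j \<noteq> j1 \<longrightarrow> D $ j $ j \<noteq> (MIN j. D $ j $ j)"
    and no_sol: "\<not> (\<exists>(\<mu>::'m \<Rightarrow> real) (xj1::real) (zj1::real).
        (let dstar = (MIN j. D $ j $ j);
             w = (\<lambda>j. (c $ j + (\<Sum>l\<in>UNIV. \<mu> l * a l $ j)) / (D $ j $ j - dstar)) in
          dstar + (\<Sum>i\<in>UNIV. \<mu> i * \<xi> i) = 0 \<and>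
          c $ j1 + (\<Sum>i\<in>UNIV. \<mu> i * a i $ j1) = 0 \<and>
          (\<forall>i. \<xi> i * zj1 + (\<Sum>j\<in>UNIV - {j1}. \<xi> i * (w j)\<^sup>2) + 2 * a i $ j1 * xj1
                 - 2 * (\<Sum>j\<in>UNIV - {j1}. a i $ j * w j) \<le> b i) \<and>
          xj1\<^sup>2 \<le> zj1 \<and>
          (\<forall>i. \<mu> i \<ge> 0)))"
  shows "vstar D c A a b = cstar D c A a b"
proof -
  define dstar where "dstar = (MIN j. D $ j $ j)"
  define \<delta> where "\<delta> j = D $ j $ j - dstar" for j
  have dstar_le: "\<forall>j. dstar \<le> D $ j $ j" by (simp add: dstar_def)
  have \<delta>: "\<delta> j1 = 0" "\<forall>j. j \<noteq> j1 \<longrightarrow> 0 < \<delta> j"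
    using j1_min j1_unique dstar_le by (auto simp: \<delta>_def dstar_def order_less_le)
  have A: "A = (\<lambda>i. \<xi> i *\<^sub>R mat 1)" using A_scalar by auto
  from asm1 obtain y where y: "\<forall>i. 0 \<le> y i" "pd ((\<Sum>i\<in>UNIV. y i * \<xi> i) *\<^sub>R mat 1 :: real^'n^'n)"
    by (auto simp: assumption1_def A scaleR_sum_left)
  have "trace_relax_feas \<xi> a b \<noteq> {}"
    using asm1 by (auto simp: assumption1_def A feasP_scalar_iff)
  then obtain x s where feas: "(x, s) \<in> trace_relax_feas \<xi> a b"
    and min: "\<forall>(x', s') \<in> trace_relax_feas \<xi> a b.
                trace_relax_obj \<delta> c dstar x s \<le> trace_relax_obj \<delta> c dstar x' s'"
    using trace_relax_has_minimizer[OF y(1) pd_scalar_imp_pos[OF y(2)]] by metis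
  have "\<nexists>\<mu> xj1 zj1. shor_gap_system \<xi> a b c \<delta> dstar j1 \<mu> xj1 zj1"
    using no_sol by (simp add: shor_gap_system_def \<delta>_def dstar_def Let_def)
  then have "s = x \<bullet> x" by (rule trace_relax_minimizer_tight[OF feas min \<delta>])
  with feas min have "cstar D c A a b \<le> vstar D c A a b"
    unfolding A \<delta>_def by (intro cstar_le_vstar_if_tight_minimizer[OF D_diag dstar_le]) auto
  with vstar_le_cstar show ?thesis by (rule antisym)
qed

end
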